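(* For every formula $\varphi$ containing no occurrence of $\mathbf{GF}$ or $\mathbf{FG}$, each of $\mathbf{GF}\varphi$ and $\mathbf{FG}\varphi$ is equivalent to a formula in normal form with at most $3^{|\varphi|}\cdot|\varphi|$ nodes.
   Context: Fix a finite set $Ap$ of atomic propositions. A word is an infinite sequence $w = w[0]w[1]\dots$ of letters of $2^{Ap}$, and $w_i$ denotes the suffix $w[i]w[i+1]\dots$. Formulas are generated by $\varphi ::= \mathbf{true} \mid \mathbf{false} \mid a \mid \neg a \mid \varphi\wedge\varphi \mid \varphi\vee\varphi \mid \mathbf{X}\varphi \mid \varphi\,\mathbf{U}\,\varphi \mid \varphi\,\mathbf{W}\,\varphi \mid \mathbf{GF}\varphi \mid \mathbf{FG}\varphi$ ($a\in Ap$), where $\mathbf{GF}$, $\mathbf{FG}$ are single unary operators (limit operators). Semantics: $w\models a$ iff $a\in w[0]$, $w\models\neg a$ iff $a\notin w[0]$, Boolean constants and connectives as usual; $w\models\mathbf{X}\varphi$ iff $w_1\models\varphi$; $w\models\varphi\mathbf{U}\psi$ iff $\exists k$: $w_k\models\psi$ and $\forall j<k$: $w_j\models\varphi$; $w\models\varphi\mathbf{W}\psi$ iff ($\forall k$: $w_k\models\varphi$) or $w\models\varphi\mathbf{U}\psi$; $w\models\mathbf{GF}\varphi$ iff $w_k\models\varphi$ for infinitely many $k$; $w\models\mathbf{FG}\varphi$ iff $\exists n\,\forall k\geq n$: $w_k\models\varphi$. Two formulas are equivalent if satisfied by the same words. The syntax tree $T_\varphi$ has leaves $\mathbf{true},\mathbf{false},a,\neg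 a$ and one internal node per operator occurrence; $|\varphi|$ is its number of nodes. $\mathbf{U}$-, $\mathbf{W}$-, $\mathbf{X}$-, $\mathbf{GF}$-, $\mathbf{FG}$-nodes are nodes whose subformula has that top operator; $\mathbf{GF}$- and $\mathbf{FG}$-nodes are limit nodes; all five kinds are temporal nodes. A node is under another if it is a proper descendant of it. A formula is in normal form if (1) no $\mathbf{U}$-node is under a $\mathbf{W}$-node; (2) no limit node is under another temporal node; (3) no $\mathbf{W}$-node is under a $\mathbf{GF}$-node and no $\mathbf{U}$-node is under an $\mathbf{FG}$-node. *)

theory Defs
  imports Main
begin

datatype 'a ltl =
    LTrue | LFalse | Prop 'a | NProp 'a
  | And "'a ltl" "'a ltl" | Or "'a ltl" "'a ltl"
  | Next "'a ltl" | Until "'a ltl" "'a ltl" | WUntil "'a ltl" "'a ltl"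
  | GF "'a ltl" | FG "'a ltl"

type_synonym 'a word = "nat \<Rightarrow> 'a set"

definition suffix :: "nat \<Rightarrow> 'a word \<Rightarrow> 'a word" where
  "suffix i w = (\<lambda>n. w (n + i))"

fun sat :: "'a word \<Rightarrow> 'a ltl \<Rightarrow> bool" where
  "sat w LTrue = True"
| "sat w LFalse = False"
| "sat w (Prop a) = (a \<in> w 0)"
| "sat w (NProp a) = (a \<notin> w 0)"
| "sat w (And p q) = (sat w p \<and> sat w q)"
| "sat w (Or p q) = (sat w p \<or> sat w q)"
| "sat w (Next p) = sat (suffix 1 w) p"
| "sat w (Until p q) = (\<exists>k. sat (suffix k w) q \<and> (\<forall>j<k. sat (suffix j w) p))"
| "sat w (WUntil p q) = ((\<forall>k. sat (suffix k w) p) \<or>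
     (\<exists>k. sat (suffix k w) q \<and> (\<forall>j<k. sat (suffix j w) p)))"
| "sat w (GF p) = infinite {k. sat (suffix k w) p}"
| "sat w (FG p) = (\<exists>n. \<forall>k\<ge>n. sat (suffix k w) p)"

definition ltl_equiv :: "'a ltl \<Rightarrow> 'a ltl \<Rightarrow> bool" where
  "ltl_equiv p q = (\<forall>w. sat w p = sat w q)"

fun fsize :: "'a ltl \<Rightarrow> nat" where
  "fsize LTrue = 1" | "fsize LFalse = 1" | "fsize (Prop a) = 1" | "fsize (NProp a) = 1"
| "fsize (And p q) = fsize p + fsize q + 1"
| "fsize (Or p q) = fsize p + fsize q + 1"
| "fsize (Next p) = fsize p + 1"
| "fsize (Until p q) = fsize p + fsize q + 1"
| "fsize (WUntil p q) = fsize p + fsize q + 1"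
| "fsize (GF p) = fsize p + 1"
| "fsize (FG p) = fsize p + 1"

fun subfs :: "'a ltl \<Rightarrow> 'a ltl set" where
  "subfs (And p q) = insert (And p q) (subfs p \<union> subfs q)"
| "subfs (Or p q) = insert (Or p q) (subfs p \<union> subfs q)"
| "subfs (Next p) = insert (Next p) (subfs p)"
| "subfs (Until p q) = insert (Until p q) (subfs p \<union> subfs q)"
| "subfs (WUntil p q) = insert (WUntil p q) (subfs p \<union> subfs q)"
| "subfs (GF p) = insert (GF p) (subfs p)"
| "subfs (FG p) = insert (FG p) (subfs p)"
| "subfs p = {p}"

fun psubfs :: "'a ltl \<Rightarrow> 'a ltl set" where
  "psubfs (And p q) = subfs p \<union> subfs q"
| "psubfs (Or p q) = subfs p \<union> subfs q"
| "psubfs (Next p) = subfs p"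
| "psubfs (Until p q) = subfs p \<union> subfs q"
| "psubfs (WUntil p q) = subfs p \<union> subfs q"
| "psubfs (GF p) = subfs p"
| "psubfs (FG p) = subfs p"
| "psubfs p = {}"

fun is_until :: "'a ltl \<Rightarrow> bool" where
  "is_until (Until _ _) = True" | "is_until _ = False"
fun is_wuntil :: "'a ltl \<Rightarrow> bool" where
  "is_wuntil (WUntil _ _) = True" | "is_wuntil _ = False"
fun is_limit :: "'a ltl \<Rightarrow> bool" where
  "is_limit (GF _) = True" | "is_limit (FG _) = True" | "is_limit _ = False"
fun is_temporal :: "'a ltl \<Rightarrow> bool" where
  "is_temporal (Next _) = True" | "is_temporal (Until _ _) = True"
| "is_temporal (WUntil _ _) = True" | "is_temporal (GF _) = True"
| "is_temporal (FG _) = True" | "is_temporal _ = False"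
fun is_GF :: "'a ltl \<Rightarrow> bool" where
  "is_GF (GF _) = True" | "is_GF _ = False"
fun is_FG :: "'a ltl \<Rightarrow> bool" where
  "is_FG (FG _) = True" | "is_FG _ = False"

text \<open>A node ps is under a node p iff ps occurs in psubfs p (for some occurrence of p).\<close>
definition normal_form :: "'a ltl \<Rightarrow> bool" where
  "normal_form \<phi> \<longleftrightarrow>
     (\<forall>p\<in>subfs \<phi>. is_wuntil p \<longrightarrow> (\<forall>q\<in>psubfs p. \<not> is_until q)) \<and>
     (\<forall>p\<in>subfs \<phi>. is_temporal p \<longrightarrow> (\<forall>q\<in>psubfs p. \<not> is_limit q)) \<and>
     (\<forall>p\<in>subfs \<phi>. is_GF p \<longrightarrow> (\<forall>q\<in>psubfs p. \<not> is_wuntil q)) \<and>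
     (\<forall>p\<in>subfs \<phi>. is_FG p \<longrightarrow> (\<forall>q\<in>psubfs p. \<not> is_until q))"

definition limit_free :: "'a ltl \<Rightarrow> bool" where
  "limit_free \<phi> \<longleftrightarrow> (\<forall>p\<in>subfs \<phi>. \<not> is_limit p)"

end

theory Submission
  imports Defs
begin

(*
  A guarded case (cs, \<psi>) is a list cs of guards together with a formula \<psi>. A list of cases
  decomposes \<phi> if on every word each case whose guards hold has \<psi> eventually implying \<phi>, and
  some such case has \<phi> eventually implying \<psi>; then GF \<phi> (resp. FG \<phi>) is equivalent to the
  disjunction of the conjunctions  cs \<and> GF \<psi>  (resp. cs \<and> FG \<psi>).

  For GF, a node \<phi>1 W \<phi>2 is split on FG \<phi>1: if it holds,
  the node is eventually true, otherwise it may be replaced by \<phi>1 U \<phi>2. For FG, a node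
  \<phi>1 U \<phi>2 is split on GF \<phi>2: if it holds, the node may be replaced by \<phi>1 W \<phi>2, otherwise it
  is eventually false. The case formulas are thus W-free for GF and U-free for FG, so that
  GF \<psi> resp. FG \<psi> is in normal form. Within a case, the guard FG \<phi>1 (resp. GF \<phi>2) may be
  replaced by FG \<psi>1 (resp. GF \<psi>2) for the case formula \<psi>i of \<phi>i; decomposing that once more,
  with the roles of GF and FG exchanged, gives a normal form whose own guards are GF resp. FG
  of subformulas of the W-free (resp. U-free) \<psi>i, hence again in normal form.

  With t nodes of type U or W and n = |\<phi>| there are at most 2^t cases, each of size at most
  2^t (n^2 + 1); as 2t < n this stays below 3^n n.
*)

section \<open>Eventual implication along a word\<close>

lemma suffix_suffix [simp]: "suffix k (suffix j w) = suffix (j + k) w"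
  by (simp add: suffix_def ac_simps)

lemma sat_GF_frequently: "sat w (GF \<phi>) \<longleftrightarrow> (\<exists>\<^sub>F k in sequentially. sat (suffix k w) \<phi>)"
  by (simp add: frequently_cofinite flip: cofinite_eq_sequentially)

lemma sat_FG_eventually: "sat w (FG \<phi>) \<longleftrightarrow> (\<forall>\<^sub>F k in sequentially. sat (suffix k w) \<phi>)"
  by (simp add: eventually_sequentially)

definition ev_imp :: "'a word \<Rightarrow> 'a ltl \<Rightarrow> 'a ltl \<Rightarrow> bool" where
  "ev_imp w \<phi> \<psi> \<longleftrightarrow> (\<forall>\<^sub>F k in sequentially. sat (suffix k w) \<phi> \<longrightarrow> sat (suffix k w) \<psi>)"

lemma ev_imp_refl: "ev_imp w \<phi> \<phi>"
  by (simp add: ev_imp_def)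

lemma ev_imp_trans: "ev_imp w \<phi> \<psi> \<Longrightarrow> ev_imp w \<psi> \<chi> \<Longrightarrow> ev_imp w \<phi> \<chi>"
  unfolding ev_imp_def by (erule (1) eventually_elim2) auto

lemma ev_imp_LFalse: "ev_imp w LFalse \<phi>"
  by (simp add: ev_imp_def)

lemma ev_imp_LTrue: "ev_imp w \<phi> LTrue"
  by (simp add: ev_imp_def)

lemma ev_imp_Next: "ev_imp w \<phi> \<psi> \<Longrightarrow> ev_imp w (Next \<phi>) (Next \<psi>)"
  unfolding ev_imp_def by (subst (asm) eventually_sequentially_Suc[symmetric]) simp

lemma ev_imp_And: "ev_imp w \<phi> \<phi>' \<Longrightarrow> ev_imp w \<psi> \<psi>' \<Longrightarrow> ev_imp w (And \<phi> \<psi>) (And \<phi>' \<psi>')"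
  unfolding ev_imp_def by (erule (1) eventually_elim2) auto

lemma ev_imp_Or: "ev_imp w \<phi> \<phi>' \<Longrightarrow> ev_imp w \<psi> \<psi>' \<Longrightarrow> ev_imp w (Or \<phi> \<psi>) (Or \<phi>' \<psi>')"
  unfolding ev_imp_def by (erule (1) eventually_elim2) auto

lemma ev_imp_until_mono:
  assumes "ev_imp w \<phi> \<phi>'" "ev_imp w \<psi> \<psi>'"
  shows "ev_imp w (Until \<phi> \<psi>) (Until \<phi>' \<psi>')" "ev_imp w (WUntil \<phi> \<psi>) (WUntil \<phi>' \<psi>')"
proof -
  from assms obtain N where N: "\<And>k. k \<ge> N \<Longrightarrow>
      (sat (suffix k w) \<phi> \<longrightarrow> sat (suffix k w) \<phi>') \<and> (sat (suffix k w) \<psi> \<longrightarrow> sat (suffix k w) \<psi>')"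
    using eventually_conj[OF assms[unfolded ev_imp_def]] unfolding eventually_sequentially by blast
  show "ev_imp w (Until \<phi> \<psi>) (Until \<phi>' \<psi>')"
    unfolding ev_imp_def eventually_sequentially
  proof (intro exI[of _ N] allI impI)
    fix k assume "N \<le> k" "sat (suffix k w) (Until \<phi> \<psi>)"
    then show "sat (suffix k w) (Until \<phi>' \<psi>')"
      using N[of "k + _"] by auto
  qed
  show "ev_imp w (WUntil \<phi> \<psi>) (WUntil \<phi>' \<psi>')"
    unfolding ev_imp_def eventually_sequentially
  proof (intro exI[of _ N] allI impI)
    fix k assume "N \<le> k" "sat (suffix k w) (WUntil \<phi> \<psi>)"
    then show "sat (suffix k w) (WUntil \<phi>' \<psi>')"
      using N[of "k + _"] by auto
  qed
qed

lemma ev_imp_GF: "ev_imp w \<phi> \<psi> \<Longrightarrow> sat w (GF \<phi>) \<Longrightarrow> sat w (GF \<psi>)"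
  unfolding ev_imp_def sat_GF_frequently by (rule frequently_mp)

lemma ev_imp_FG: "ev_imp w \<phi> \<psi> \<Longrightarrow> sat w (FG \<phi>) \<Longrightarrow> sat w (FG \<psi>)"
  unfolding ev_imp_def sat_FG_eventually by (rule eventually_mp)

lemma ev_imp_Until_WUntil: "ev_imp w (Until \<phi> \<psi>) (WUntil \<phi> \<psi>)"
  by (auto simp: ev_imp_def)

lemma ev_imp_WUntil_Until_if_GF:
  assumes "sat w (GF \<psi>)"
  shows "ev_imp w (WUntil \<phi> \<psi>) (Until \<phi> \<psi>)"
  unfolding ev_imp_def
proof (intro always_eventually allI impI)
  fix k assume W: "sat (suffix k w) (WUntil \<phi> \<psi>)"
  obtain j where "j \<ge> k" "sat (suffix j w) \<psi>"
    using assms unfolding sat_GF_frequently frequently_sequentially by blast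
  then have "\<exists>i. sat (suffix (k + i) w) \<psi>"
    by (metis le_add_diff_inverse)
  then show "sat (suffix k w) (Until \<phi> \<psi>)"
    using W by auto
qed

lemma ev_imp_WUntil_Until_if_not_FG:
  assumes "\<not> sat w (FG \<phi>)"
  shows "ev_imp w (WUntil \<phi> \<psi>) (Until \<phi> \<psi>)"
  unfolding ev_imp_def
proof (intro always_eventually allI impI)
  fix k assume W: "sat (suffix k w) (WUntil \<phi> \<psi>)"
  obtain j where "j \<ge> k" "\<not> sat (suffix j w) \<phi>"
    using assms by auto
  then have "\<exists>i. \<not> sat (suffix (k + i) w) \<phi>"
    by (metis le_add_diff_inverse)
  then show "sat (suffix k w) (Until \<phi> \<psi>)"
    using W by auto
qed

lemma ev_imp_Until_LFalse_if_not_GF: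
  assumes "\<not> sat w (GF \<psi>)"
  shows "ev_imp w (Until \<phi> \<psi>) LFalse"
proof -
  obtain N where "\<forall>k\<ge>N. \<not> sat (suffix k w) \<psi>"
    using assms unfolding sat_GF_frequently not_frequently eventually_sequentially by blast
  then show ?thesis
    unfolding ev_imp_def eventually_sequentially by (auto intro!: exI[of _ N])
qed

lemma ev_imp_LTrue_WUntil_if_FG:
  assumes "sat w (FG \<phi>)"
  shows "ev_imp w LTrue (WUntil \<phi> \<psi>)"
proof -
  obtain N where "\<forall>k\<ge>N. sat (suffix k w) \<phi>"
    using assms by auto
  then show ?thesis
    unfolding ev_imp_def eventually_sequentially by (auto intro!: exI[of _ N])
qed

definition lim_op :: "bool \<Rightarrow> 'a ltl \<Rightarrow> 'a ltl" where
  "lim_op gf = (if gf then GF else FG)"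

lemma fsize_lim_op [simp]: "fsize (lim_op gf \<phi>) = fsize \<phi> + 1"
  by (simp add: lim_op_def)

lemma lim_op_True [simp]: "lim_op True = GF"
  and lim_op_False [simp]: "lim_op False = FG"
  by (simp_all add: lim_op_def)

lemma ev_imp_lim_op: "ev_imp w \<phi> \<psi> \<Longrightarrow> sat w (lim_op gf \<phi>) \<Longrightarrow> sat w (lim_op gf \<psi>)"
  unfolding lim_op_def using ev_imp_GF ev_imp_FG by (cases gf) simp_all

section \<open>Guarded cases\<close>

type_synonym 'a guarded = "'a ltl list \<times> 'a ltl"

definition limit_decomp :: "'a guarded list \<Rightarrow> 'a ltl \<Rightarrow> bool" where
  "limit_decomp D \<phi> \<longleftrightarrow> (\<forall>w.
     (\<forall>(cs, \<psi>)\<in>set D. list_all (sat w) cs \<longrightarrow> ev_imp w \<psi> \<phi>) \<and>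
     (\<exists>(cs, \<psi>)\<in>set D. list_all (sat w) cs \<and> ev_imp w \<phi> \<psi>))"

fun Or_list :: "'a ltl list \<Rightarrow> 'a ltl" where
  "Or_list [] = LFalse"
| "Or_list [\<phi>] = \<phi>"
| "Or_list (\<phi> # \<psi> # \<phi>s) = Or \<phi> (Or_list (\<psi> # \<phi>s))"

fun guarded_lim :: "bool \<Rightarrow> 'a guarded \<Rightarrow> 'a ltl" where
  "guarded_lim gf (cs, \<psi>) = foldr And cs (lim_op gf \<psi>)"

definition guarded_disj :: "bool \<Rightarrow> 'a guarded list \<Rightarrow> 'a ltl" where
  "guarded_disj gf D = Or_list (map (guarded_lim gf) D)"

lemma sat_Or_list: "sat w (Or_list \<phi>s) \<longleftrightarrow> (\<exists>\<phi>\<in>set \<phi>s. sat w \<phi>)"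
  by (induction \<phi>s rule: Or_list.induct) auto

lemma sat_foldr_And: "sat w (foldr And cs \<phi>) \<longleftrightarrow> list_all (sat w) cs \<and> sat w \<phi>"
  by (induction cs) auto

lemma sat_guarded_disj:
  "sat w (guarded_disj gf D) \<longleftrightarrow> (\<exists>(cs, \<psi>)\<in>set D. list_all (sat w) cs \<and> sat w (lim_op gf \<psi>))"
  unfolding guarded_disj_def sat_Or_list by (force simp: sat_foldr_And simp del: sat.simps)

lemma limit_decomp_equiv:
  assumes "limit_decomp D \<phi>"
  shows "ltl_equiv (guarded_disj gf D) (lim_op gf \<phi>)"
  unfolding ltl_equiv_def sat_guarded_disj
  using assms ev_imp_lim_op unfolding limit_decomp_def by fast

fun guarded_size :: "'a guarded \<Rightarrow> nat" where
  "guarded_size (cs, \<psi>) = (\<Sum>c\<leftarrow>cs. fsize c + 1) + fsize \<psi> + 1"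

lemma fsize_Or_list: "\<phi>s \<noteq> [] \<Longrightarrow> fsize (Or_list \<phi>s) + 1 = (\<Sum>\<phi>\<leftarrow>\<phi>s. fsize \<phi> + 1)"
  by (induction \<phi>s rule: Or_list.induct) auto

lemma fsize_foldr_And: "fsize (foldr And cs \<phi>) = (\<Sum>c\<leftarrow>cs. fsize c + 1) + fsize \<phi>"
  by (induction cs) auto

lemma fsize_guarded_lim: "fsize (guarded_lim gf d) = guarded_size d"
  by (cases d) (simp add: fsize_foldr_And)

lemma fsize_guarded_disj_less:
  assumes "D \<noteq> []" and "\<forall>d\<in>set D. guarded_size d \<le> K"
  shows "fsize (guarded_disj gf D) < length D * (K + 1)"
proof -
  have "fsize (guarded_disj gf D) + 1 = (\<Sum>d\<leftarrow>D. guarded_size d + 1)"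
    unfolding guarded_disj_def using fsize_Or_list[of "map (guarded_lim gf) D"] assms(1)
    by (simp add: fsize_guarded_lim o_def)
  also have "\<dots> \<le> (\<Sum>d\<leftarrow>D. K + 1)"
    using assms(2) by (intro sum_list_mono) simp
  finally show ?thesis
    by (simp add: sum_list_triv)
qed

section \<open>Normal forms of limit formulas\<close>

definition until_free :: "'a ltl \<Rightarrow> bool" where
  "until_free \<phi> \<longleftrightarrow> (\<forall>p\<in>subfs \<phi>. \<not> is_until p)"

definition wuntil_free :: "'a ltl \<Rightarrow> bool" where
  "wuntil_free \<phi> \<longleftrightarrow> (\<forall>p\<in>subfs \<phi>. \<not> is_wuntil p)"

lemma subfs_refl: "\<phi> \<in> subfs \<phi>"
  by (cases \<phi>) auto

lemma subfs_trans: "\<psi> \<in> subfs \<phi> \<Longrightarrow> subfs \<psi> \<subseteq> subfs \<phi>"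
  by (induction \<phi>) auto

lemma psubfs_subset_subfs: "psubfs \<phi> \<subseteq> subfs \<phi>"
  by (cases \<phi>) auto

lemma subfs_psubfs: "p \<in> subfs \<phi> \<Longrightarrow> q \<in> psubfs p \<Longrightarrow> q \<in> subfs \<phi>"
  using psubfs_subset_subfs subfs_trans by blast

lemma limit_free_simps [simp]:
  "limit_free LTrue" "limit_free LFalse" "limit_free (Prop a)" "limit_free (NProp a)"
  "limit_free (Next \<phi>) \<longleftrightarrow> limit_free \<phi>"
  "limit_free (And \<phi> \<psi>) \<longleftrightarrow> limit_free \<phi> \<and> limit_free \<psi>"
  "limit_free (Or \<phi> \<psi>) \<longleftrightarrow> limit_free \<phi> \<and> limit_free \<psi>"
  "limit_free (Until \<phi> \<psi>) \<longleftrightarrow> limit_free \<phi> \<and> limit_free \<psi>"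
  "limit_free (WUntil \<phi> \<psi>) \<longleftrightarrow> limit_free \<phi> \<and> limit_free \<psi>"
  "\<not> limit_free (GF \<phi>)" "\<not> limit_free (FG \<phi>)"
  by (auto simp: limit_free_def)

lemma until_free_simps [simp]:
  "until_free LTrue" "until_free LFalse" "until_free (Prop a)" "until_free (NProp a)"
  "until_free (Next \<phi>) \<longleftrightarrow> until_free \<phi>"
  "until_free (And \<phi> \<psi>) \<longleftrightarrow> until_free \<phi> \<and> until_free \<psi>"
  "until_free (Or \<phi> \<psi>) \<longleftrightarrow> until_free \<phi> \<and> until_free \<psi>"
  "\<not> until_free (Until \<phi> \<psi>)"
  "until_free (WUntil \<phi> \<psi>) \<longleftrightarrow> until_free \<phi> \<and> until_free \<psi>"
  by (auto simp: until_free_def)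

lemma wuntil_free_simps [simp]:
  "wuntil_free LTrue" "wuntil_free LFalse" "wuntil_free (Prop a)" "wuntil_free (NProp a)"
  "wuntil_free (Next \<phi>) \<longleftrightarrow> wuntil_free \<phi>"
  "wuntil_free (And \<phi> \<psi>) \<longleftrightarrow> wuntil_free \<phi> \<and> wuntil_free \<psi>"
  "wuntil_free (Or \<phi> \<psi>) \<longleftrightarrow> wuntil_free \<phi> \<and> wuntil_free \<psi>"
  "wuntil_free (Until \<phi> \<psi>) \<longleftrightarrow> wuntil_free \<phi> \<and> wuntil_free \<psi>"
  "\<not> wuntil_free (WUntil \<phi> \<psi>)"
  by (auto simp: wuntil_free_def)

lemma is_limit_iff: "is_limit p \<longleftrightarrow> is_GF p \<or> is_FG p"
  by (cases p) auto

lemma normal_form_GF: "normal_form (GF \<psi>) \<longleftrightarrow> limit_free \<psi> \<and> wuntil_free \<psi>"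
proof
  assume "normal_form (GF \<psi>)"
  then show "limit_free \<psi> \<and> wuntil_free \<psi>"
    unfolding normal_form_def limit_free_def wuntil_free_def by auto
next
  assume "limit_free \<psi> \<and> wuntil_free \<psi>"
  then show "normal_form (GF \<psi>)"
    unfolding normal_form_def limit_free_def wuntil_free_def
    by (auto simp: is_limit_iff dest: subfs_psubfs)
qed

lemma normal_form_FG: "normal_form (FG \<psi>) \<longleftrightarrow> limit_free \<psi> \<and> until_free \<psi>"
proof
  assume "normal_form (FG \<psi>)"
  then show "limit_free \<psi> \<and> until_free \<psi>"
    unfolding normal_form_def limit_free_def until_free_def by auto
next
  assume "limit_free \<psi> \<and> until_free \<psi>"
  then show "normal_form (FG \<psi>)"
    unfolding normal_form_def limit_free_def until_free_def
    by (auto simp: is_limit_iff dest: subfs_psubfs)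
qed

lemma normal_form_lim_op:
  "normal_form (lim_op gf \<psi>) \<longleftrightarrow> limit_free \<psi> \<and> (if gf then wuntil_free \<psi> else until_free \<psi>)"
  by (simp add: lim_op_def normal_form_GF normal_form_FG)

lemma normal_form_lim_op_subfs:
  assumes "normal_form (lim_op gf \<phi>)" and "\<psi> \<in> subfs \<phi>"
  shows "normal_form (lim_op gf \<psi>)"
  using assms(1) subfs_trans[OF assms(2)]
  unfolding normal_form_lim_op limit_free_def until_free_def wuntil_free_def by (cases gf) auto

lemma normal_form_And [simp]: "normal_form (And \<phi> \<psi>) \<longleftrightarrow> normal_form \<phi> \<and> normal_form \<psi>"
  by (auto simp: normal_form_def)

lemma normal_form_Or [simp]: "normal_form (Or \<phi> \<psi>) \<longleftrightarrow> normal_form \<phi> \<and> normal_form \<psi>"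
  by (auto simp: normal_form_def)

lemma normal_form_LFalse: "normal_form LFalse"
  by (simp add: normal_form_def)

lemma normal_form_Or_list: "list_all normal_form \<phi>s \<Longrightarrow> normal_form (Or_list \<phi>s)"
  by (induction \<phi>s rule: Or_list.induct) (auto simp: normal_form_LFalse)

lemma normal_form_guarded_disj:
  assumes "\<forall>(cs, \<psi>)\<in>set D. list_all normal_form cs \<and> normal_form (lim_op gf \<psi>)"
  shows "normal_form (guarded_disj gf D)"
proof -
  have "normal_form (foldr And cs \<phi>)" if "list_all normal_form cs" "normal_form \<phi>" for cs \<phi>
    using that by (induction cs) auto
  then show ?thesis
    using assms unfolding guarded_disj_def
    by (force intro!: normal_form_Or_list simp: list_all_iff)
qed

section \<open>The decomposition\<close>

definition combine ::
  "('a ltl \<Rightarrow> 'a ltl \<Rightarrow> 'a ltl) \<Rightarrow> 'a guarded list \<Rightarrow> 'a guarded list \<Rightarrow> 'a guarded list" where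
  "combine f D1 D2 = [(cs1 @ cs2, f \<psi>1 \<psi>2). (cs1, \<psi>1) \<leftarrow> D1, (cs2, \<psi>2) \<leftarrow> D2]"

definition add_guard :: "('a ltl \<Rightarrow> 'a ltl) \<Rightarrow> 'a guarded list \<Rightarrow> 'a guarded list" where
  "add_guard G D = [(cs @ [G \<psi>], \<psi>). (cs, \<psi>) \<leftarrow> D]"

definition until_cases ::
  "('a ltl \<Rightarrow> 'a ltl) \<Rightarrow> 'a guarded list \<Rightarrow> 'a guarded list \<Rightarrow> 'a guarded list" where
  "until_cases G D1 D2 = ([], LFalse) # combine WUntil D1 (add_guard G D2)"

definition wuntil_cases ::
  "('a ltl \<Rightarrow> 'a ltl) \<Rightarrow> 'a guarded list \<Rightarrow> 'a guarded list \<Rightarrow> 'a guarded list" where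
  "wuntil_cases G D1 D2 = combine Until D1 D2 @ [(cs, LTrue). (cs, \<psi>) \<leftarrow> add_guard G D1]"

lemma mem_combine:
  "(cs, \<psi>) \<in> set (combine f D1 D2) \<longleftrightarrow>
     (\<exists>cs1 \<psi>1 cs2 \<psi>2. (cs1, \<psi>1) \<in> set D1 \<and> (cs2, \<psi>2) \<in> set D2 \<and> cs = cs1 @ cs2 \<and> \<psi> = f \<psi>1 \<psi>2)"
  by (force simp: combine_def)

lemma mem_add_guard: "(cs, \<psi>) \<in> set (add_guard G D) \<longleftrightarrow> (\<exists>cs'. (cs', \<psi>) \<in> set D \<and> cs = cs' @ [G \<psi>])"
  by (force simp: add_guard_def)

lemma mem_until_cases:
  "(cs, \<psi>) \<in> set (until_cases G D1 D2) \<longleftrightarrow> cs = [] \<and> \<psi> = LFalse \<or>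
     (\<exists>cs1 \<psi>1 cs2 \<psi>2. (cs1, \<psi>1) \<in> set D1 \<and> (cs2, \<psi>2) \<in> set D2 \<and>
        cs = cs1 @ cs2 @ [G \<psi>2] \<and> \<psi> = WUntil \<psi>1 \<psi>2)"
  by (simp add: until_cases_def mem_combine mem_add_guard) blast

lemma mem_wuntil_cases:
  "(cs, \<psi>) \<in> set (wuntil_cases G D1 D2) \<longleftrightarrow> (cs, \<psi>) \<in> set (combine Until D1 D2) \<or>
     (\<exists>cs1 \<psi>1. (cs1, \<psi>1) \<in> set D1 \<and> cs = cs1 @ [G \<psi>1] \<and> \<psi> = LTrue)"
  by (force simp: wuntil_cases_def mem_add_guard)

(* G b \<phi> \<psi> is a guard standing for lim_op b \<phi> in a case whose formula for \<phi> is \<psi>. *)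
definition lim_guard :: "(bool \<Rightarrow> 'a ltl \<Rightarrow> 'a ltl \<Rightarrow> 'a ltl) \<Rightarrow> bool" where
  "lim_guard G \<longleftrightarrow> (\<forall>b w \<phi> \<psi>.
     (ev_imp w \<psi> \<phi> \<longrightarrow> sat w (G b \<phi> \<psi>) \<longrightarrow> sat w (lim_op b \<phi>)) \<and>
     (ev_imp w \<phi> \<psi> \<longrightarrow> sat w (lim_op b \<phi>) \<longrightarrow> sat w (G b \<phi> \<psi>)))"

lemma lim_guardD:
  assumes "lim_guard G"
  shows "ev_imp w \<psi> \<phi> \<Longrightarrow> sat w (G b \<phi> \<psi>) \<Longrightarrow> sat w (lim_op b \<phi>)"
    and "ev_imp w \<phi> \<psi> \<Longrightarrow> sat w (lim_op b \<phi>) \<Longrightarrow> sat w (G b \<phi> \<psi>)"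
  using assms unfolding lim_guard_def by blast+

fun decomp :: "(bool \<Rightarrow> 'a ltl \<Rightarrow> 'a ltl \<Rightarrow> 'a ltl) \<Rightarrow> bool \<Rightarrow> 'a ltl \<Rightarrow> 'a guarded list" where
  "decomp G gf (Next \<phi>) = [(cs, Next \<psi>). (cs, \<psi>) \<leftarrow> decomp G gf \<phi>]"
| "decomp G gf (And \<phi>1 \<phi>2) = combine And (decomp G gf \<phi>1) (decomp G gf \<phi>2)"
| "decomp G gf (Or \<phi>1 \<phi>2) = combine Or (decomp G gf \<phi>1) (decomp G gf \<phi>2)"
| "decomp G gf (Until \<phi>1 \<phi>2) =
     (if gf then combine Until (decomp G gf \<phi>1) (decomp G gf \<phi>2)
      else until_cases (G True \<phi>2) (decomp G gf \<phi>1) (decomp G gf \<phi>2))"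
| "decomp G gf (WUntil \<phi>1 \<phi>2) =
     (if gf then wuntil_cases (G False \<phi>1) (decomp G gf \<phi>1) (decomp G gf \<phi>2)
      else combine WUntil (decomp G gf \<phi>1) (decomp G gf \<phi>2))"
| "decomp G gf \<phi> = [([], \<phi>)]"

lemma mem_decomp_Next:
  "(cs, \<psi>) \<in> set (decomp G gf (Next \<phi>)) \<longleftrightarrow> (\<exists>\<psi>'. (cs, \<psi>') \<in> set (decomp G gf \<phi>) \<and> \<psi> = Next \<psi>')"
  by force

lemma limit_decompI:
  assumes "\<And>w cs \<psi>. (cs, \<psi>) \<in> set D \<Longrightarrow> list_all (sat w) cs \<Longrightarrow> ev_imp w \<psi> \<phi>"
    and "\<And>w. \<exists>(cs, \<psi>)\<in>set D. list_all (sat w) cs \<and> ev_imp w \<phi> \<psi>"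
  shows "limit_decomp D \<phi>"
  using assms unfolding limit_decomp_def by blast

lemma limit_decompD:
  assumes "limit_decomp D \<phi>" and "(cs, \<psi>) \<in> set D" and "list_all (sat w) cs"
  shows "ev_imp w \<psi> \<phi>"
  using assms unfolding limit_decomp_def by blast

lemma limit_decompE:
  assumes "limit_decomp D \<phi>"
  obtains cs \<psi> where "(cs, \<psi>) \<in> set D" and "list_all (sat w) cs" and "ev_imp w \<phi> \<psi>"
  using assms unfolding limit_decomp_def by blast

lemma limit_decomp_single: "limit_decomp [([], \<phi>)] \<phi>"
  by (rule limit_decompI) (auto simp: ev_imp_refl)

lemma limit_decomp_Next:
  assumes "limit_decomp D \<phi>"
  shows "limit_decomp [(cs, Next \<psi>). (cs, \<psi>) \<leftarrow> D] (Next \<phi>)"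
proof (rule limit_decompI)
  fix w
  obtain cs \<psi> where "(cs, \<psi>) \<in> set D" "list_all (sat w) cs" "ev_imp w \<phi> \<psi>"
    using assms by (rule limit_decompE)
  then show "\<exists>(cs, \<psi>)\<in>set [(cs, Next \<psi>). (cs, \<psi>) \<leftarrow> D]. list_all (sat w) cs \<and> ev_imp w (Next \<phi>) \<psi>"
    by (force intro: ev_imp_Next)
qed (auto intro: ev_imp_Next limit_decompD[OF assms])

lemma limit_decomp_combine:
  assumes D1: "limit_decomp D1 \<phi>1" and D2: "limit_decomp D2 \<phi>2"
    and mono: "\<And>w \<psi>1 \<psi>2 \<chi>1 \<chi>2. ev_imp w \<psi>1 \<chi>1 \<Longrightarrow> ev_imp w \<psi>2 \<chi>2 \<Longrightarrow> ev_imp w (f \<psi>1 \<psi>2) (f \<chi>1 \<chi>2)"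
  shows "limit_decomp (combine f D1 D2) (f \<phi>1 \<phi>2)"
proof (rule limit_decompI)
  fix w cs \<psi> assume "(cs, \<psi>) \<in> set (combine f D1 D2)" and sat: "list_all (sat w) cs"
  then obtain cs1 \<psi>1 cs2 \<psi>2 where m1: "(cs1, \<psi>1) \<in> set D1" and m2: "(cs2, \<psi>2) \<in> set D2"
    and "cs = cs1 @ cs2" "\<psi> = f \<psi>1 \<psi>2"
    by (auto simp: mem_combine)
  with sat show "ev_imp w \<psi> (f \<phi>1 \<phi>2)"
    by (auto intro!: mono limit_decompD[OF D1 m1] limit_decompD[OF D2 m2])
next
  fix w
  obtain cs1 \<psi>1 where "(cs1, \<psi>1) \<in> set D1" "list_all (sat w) cs1" "ev_imp w \<phi>1 \<psi>1"
    using D1 by (rule limit_decompE)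
  moreover obtain cs2 \<psi>2 where "(cs2, \<psi>2) \<in> set D2" "list_all (sat w) cs2" "ev_imp w \<phi>2 \<psi>2"
    using D2 by (rule limit_decompE)
  ultimately show "\<exists>(cs, \<psi>)\<in>set (combine f D1 D2). list_all (sat w) cs \<and> ev_imp w (f \<phi>1 \<phi>2) \<psi>"
    by (intro bexI[of _ "(cs1 @ cs2, f \<psi>1 \<psi>2)"]) (auto simp: mem_combine intro: mono)
qed

lemma until_cases_sound:
  assumes D1: "limit_decomp D1 \<phi>1" and D2: "limit_decomp D2 \<phi>2" and G: "lim_guard G"
    and mem: "(cs, \<psi>) \<in> set (until_cases (G True \<phi>2) D1 D2)" and sat: "list_all (sat w) cs"
  shows "ev_imp w \<psi> (Until \<phi>1 \<phi>2)"
proof -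
  from mem consider "\<psi> = LFalse"
    | cs1 \<psi>1 cs2 \<psi>2 where "(cs1, \<psi>1) \<in> set D1" "(cs2, \<psi>2) \<in> set D2"
      "cs = cs1 @ cs2 @ [G True \<phi>2 \<psi>2]" "\<psi> = WUntil \<psi>1 \<psi>2"
    by (auto simp: mem_until_cases)
  then show ?thesis
  proof cases
    case 1
    then show ?thesis by (simp add: ev_imp_LFalse)
  next
    case 2
    with sat have ev: "ev_imp w \<psi>1 \<phi>1" "ev_imp w \<psi>2 \<phi>2"
      by (auto intro: limit_decompD[OF D1] limit_decompD[OF D2])
    have "sat w (GF \<phi>2)"
      using lim_guardD(1)[OF G ev(2), of True] sat 2 by simp
    then show ?thesis
      using 2 ev_imp_until_mono(2)[OF ev] ev_imp_WUntil_Until_if_GF ev_imp_trans by blast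
  qed
qed

lemma until_cases_complete:
  assumes D1: "limit_decomp D1 \<phi>1" and D2: "limit_decomp D2 \<phi>2" and G: "lim_guard G"
  shows "\<exists>(cs, \<psi>)\<in>set (until_cases (G True \<phi>2) D1 D2). list_all (sat w) cs \<and> ev_imp w (Until \<phi>1 \<phi>2) \<psi>"
proof (cases "sat w (GF \<phi>2)")
  case True
  obtain cs1 \<psi>1 where D: "(cs1, \<psi>1) \<in> set D1" "list_all (sat w) cs1" and ev1: "ev_imp w \<phi>1 \<psi>1"
    using D1 by (rule limit_decompE)
  obtain cs2 \<psi>2 where D': "(cs2, \<psi>2) \<in> set D2" "list_all (sat w) cs2" and ev2: "ev_imp w \<phi>2 \<psi>2"
    using D2 by (rule limit_decompE)
  have "sat w (G True \<phi>2 \<psi>2)"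
    using lim_guardD(2)[OF G ev2] True by simp
  moreover have "ev_imp w (Until \<phi>1 \<phi>2) (WUntil \<psi>1 \<psi>2)"
    using ev_imp_trans[OF ev_imp_until_mono(1)[OF ev1 ev2] ev_imp_Until_WUntil] .
  ultimately show ?thesis
    using D D' by (intro bexI[of _ "(cs1 @ cs2 @ [G True \<phi>2 \<psi>2], WUntil \<psi>1 \<psi>2)"])
      (auto simp: mem_until_cases)
next
  case False
  then show ?thesis
    using ev_imp_Until_LFalse_if_not_GF by (intro bexI[of _ "([], LFalse)"]) (auto simp: mem_until_cases)
qed

lemma wuntil_cases_sound:
  assumes D1: "limit_decomp D1 \<phi>1" and D2: "limit_decomp D2 \<phi>2" and G: "lim_guard G"
    and mem: "(cs, \<psi>) \<in> set (wuntil_cases (G False \<phi>1) D1 D2)" and sat: "list_all (sat w) cs"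
  shows "ev_imp w \<psi> (WUntil \<phi>1 \<phi>2)"
proof -
  from mem consider "(cs, \<psi>) \<in> set (combine Until D1 D2)"
    | cs1 \<psi>1 where "(cs1, \<psi>1) \<in> set D1" "cs = cs1 @ [G False \<phi>1 \<psi>1]" "\<psi> = LTrue"
    by (auto simp: mem_wuntil_cases)
  then show ?thesis
  proof cases
    case 1
    have "ev_imp w \<psi> (Until \<phi>1 \<phi>2)"
      using limit_decomp_combine[OF D1 D2 ev_imp_until_mono(1)] 1 sat by (rule limit_decompD)
    then show ?thesis
      using ev_imp_Until_WUntil ev_imp_trans by blast
  next
    case 2
    with sat have ev: "ev_imp w \<psi>1 \<phi>1"
      by (auto intro: limit_decompD[OF D1])
    have "sat w (FG \<phi>1)"
      using lim_guardD(1)[OF G ev, of False] sat 2 by simp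
    then show ?thesis
      using 2 ev_imp_LTrue_WUntil_if_FG by simp
  qed
qed

lemma wuntil_cases_complete:
  assumes D1: "limit_decomp D1 \<phi>1" and D2: "limit_decomp D2 \<phi>2" and G: "lim_guard G"
  shows "\<exists>(cs, \<psi>)\<in>set (wuntil_cases (G False \<phi>1) D1 D2). list_all (sat w) cs \<and> ev_imp w (WUntil \<phi>1 \<phi>2) \<psi>"
proof (cases "sat w (FG \<phi>1)")
  case True
  obtain cs1 \<psi>1 where D: "(cs1, \<psi>1) \<in> set D1" "list_all (sat w) cs1" and ev: "ev_imp w \<phi>1 \<psi>1"
    using D1 by (rule limit_decompE)
  have "sat w (G False \<phi>1 \<psi>1)"
    using lim_guardD(2)[OF G ev] True by simp
  then show ?thesis
    using D ev_imp_LTrue by (intro bexI[of _ "(cs1 @ [G False \<phi>1 \<psi>1], LTrue)"])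
      (auto simp: mem_wuntil_cases)
next
  case False
  obtain cs \<psi> where "(cs, \<psi>) \<in> set (combine Until D1 D2)" "list_all (sat w) cs"
    and "ev_imp w (Until \<phi>1 \<phi>2) \<psi>"
    using limit_decomp_combine[OF D1 D2 ev_imp_until_mono(1)] by (rule limit_decompE)
  moreover have "ev_imp w (WUntil \<phi>1 \<phi>2) (Until \<phi>1 \<phi>2)"
    using False by (rule ev_imp_WUntil_Until_if_not_FG)
  ultimately show ?thesis
    using ev_imp_trans by (intro bexI[of _ "(cs, \<psi>)"]) (auto simp: mem_wuntil_cases)
qed

lemma limit_decomp_until_cases:
  assumes "limit_decomp D1 \<phi>1" and "limit_decomp D2 \<phi>2" and "lim_guard G"
  shows "limit_decomp (until_cases (G True \<phi>2) D1 D2) (Until \<phi>1 \<phi>2)"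
  using until_cases_sound[OF assms] until_cases_complete[OF assms] by (rule limit_decompI)

lemma limit_decomp_wuntil_cases:
  assumes "limit_decomp D1 \<phi>1" and "limit_decomp D2 \<phi>2" and "lim_guard G"
  shows "limit_decomp (wuntil_cases (G False \<phi>1) D1 D2) (WUntil \<phi>1 \<phi>2)"
  using wuntil_cases_sound[OF assms] wuntil_cases_complete[OF assms] by (rule limit_decompI)

lemma limit_decomp_decomp:
  assumes "lim_guard G"
  shows "limit_decomp (decomp G gf \<phi>) \<phi>"
proof (induction \<phi>)
  case (Next \<phi>)
  then show ?case by (simp add: limit_decomp_Next)
next
  case (And \<phi>1 \<phi>2)
  then show ?case by (simp add: limit_decomp_combine ev_imp_And)
next
  case (Or \<phi>1 \<phi>2)
  then show ?case by (simp add: limit_decomp_combine ev_imp_Or)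
next
  case (Until \<phi>1 \<phi>2)
  then show ?case
    using assms by (cases gf) (simp_all add: limit_decomp_combine ev_imp_until_mono limit_decomp_until_cases)
next
  case (WUntil \<phi>1 \<phi>2)
  then show ?case
    using assms by (cases gf) (simp_all add: limit_decomp_combine ev_imp_until_mono limit_decomp_wuntil_cases)
qed (simp_all add: limit_decomp_single)

section \<open>Number, shape and size of the cases\<close>

fun until_nodes :: "'a ltl \<Rightarrow> nat" where
  "until_nodes (Next \<phi>) = until_nodes \<phi>"
| "until_nodes (And \<phi> \<psi>) = until_nodes \<phi> + until_nodes \<psi>"
| "until_nodes (Or \<phi> \<psi>) = until_nodes \<phi> + until_nodes \<psi>"
| "until_nodes (Until \<phi> \<psi>) = until_nodes \<phi> + until_nodes \<psi> + 1"
| "until_nodes (WUntil \<phi> \<psi>) = until_nodes \<phi> + until_nodes \<psi> + 1"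
| "until_nodes _ = 0"

lemma until_nodes_le_fsize: "2 * until_nodes \<phi> + 1 \<le> fsize \<phi>"
  by (induction \<phi>) auto

lemma length_combine [simp]: "length (combine f D1 D2) = length D1 * length D2"
  by (induction D1) (auto simp: combine_def)

lemma length_add_guard [simp]: "length (add_guard G D) = length D"
  by (simp add: add_guard_def)

lemma length_until_cases [simp]: "length (until_cases G D1 D2) = length D1 * length D2 + 1"
  by (simp add: until_cases_def)

lemma length_wuntil_cases [simp]: "length (wuntil_cases G D1 D2) = length D1 * length D2 + length D1"
  by (simp add: wuntil_cases_def add_guard_def)

lemma combine_eq_Nil_iff [simp]: "combine f D1 D2 = [] \<longleftrightarrow> D1 = [] \<or> D2 = []"
  by (metis length_0_conv length_combine mult_is_0)

lemma decomp_nonempty: "decomp G gf \<phi> \<noteq> []"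
  by (induction \<phi> arbitrary: gf) (simp_all add: until_cases_def wuntil_cases_def)

lemma length_decomp: "length (decomp G gf \<phi>) \<le> 2 ^ until_nodes \<phi>"
proof (induction \<phi> arbitrary: gf)
  case (And \<phi>1 \<phi>2)
  then show ?case by (simp add: power_add mult_le_mono)
next
  case (Or \<phi>1 \<phi>2)
  then show ?case by (simp add: power_add mult_le_mono)
next
  case (Until \<phi>1 \<phi>2)
  let ?n1 = "length (decomp G gf \<phi>1)" and ?n2 = "length (decomp G gf \<phi>2)"
  have "?n1 * ?n2 \<le> 2 ^ until_nodes \<phi>1 * 2 ^ until_nodes \<phi>2"
    using Until.IH by (rule mult_le_mono)
  moreover have "1 \<le> 2 ^ until_nodes \<phi>1 * (2::nat) ^ until_nodes \<phi>2"
    by simp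
  ultimately have "?n1 * ?n2 + 1 \<le> 2 * (2 ^ until_nodes \<phi>1 * 2 ^ until_nodes \<phi>2)"
    by linarith
  then show ?case
    by (cases gf) (simp_all add: power_add)
next
  case (WUntil \<phi>1 \<phi>2)
  let ?n1 = "length (decomp G gf \<phi>1)" and ?n2 = "length (decomp G gf \<phi>2)"
  have "?n1 * ?n2 \<le> 2 ^ until_nodes \<phi>1 * 2 ^ until_nodes \<phi>2"
    using WUntil.IH by (rule mult_le_mono)
  moreover have "?n1 \<le> ?n1 * ?n2"
    using decomp_nonempty[of G gf \<phi>2] by (simp add: Suc_le_eq)
  ultimately have "?n1 * ?n2 + ?n1 \<le> 2 * (2 ^ until_nodes \<phi>1 * 2 ^ until_nodes \<phi>2)"
    by linarith
  then show ?case
    by (cases gf) (simp_all add: power_add)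
qed simp_all

lemma decomp_formula_size:
  "(cs, \<psi>) \<in> set (decomp G gf \<phi>) \<Longrightarrow> fsize \<psi> \<le> fsize \<phi> \<and> until_nodes \<psi> \<le> until_nodes \<phi>"
proof (induction \<phi> arbitrary: gf cs \<psi>)
  case (Next \<phi>)
  then show ?case by (auto simp: mem_decomp_Next dest!: Next.IH)
next
  case (And \<phi>1 \<phi>2)
  then show ?case by (auto simp: mem_combine dest!: And.IH)
next
  case (Or \<phi>1 \<phi>2)
  then show ?case by (auto simp: mem_combine dest!: Or.IH)
next
  case (Until \<phi>1 \<phi>2)
  then show ?case by (cases gf) (auto simp: mem_combine mem_until_cases dest!: Until.IH)
next
  case (WUntil \<phi>1 \<phi>2)
  then show ?case by (cases gf) (auto simp: mem_combine mem_wuntil_cases dest!: WUntil.IH)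
qed auto

lemma normal_form_decomp_formula:
  assumes "(cs, \<psi>) \<in> set (decomp G gf \<phi>)" and "limit_free \<phi>"
  shows "normal_form (lim_op gf \<psi>)"
  using assms unfolding normal_form_lim_op
proof (induction \<phi> arbitrary: gf cs \<psi>)
  case (Next \<phi>)
  then show ?case by (auto simp: mem_decomp_Next dest!: Next.IH)
next
  case (And \<phi>1 \<phi>2)
  then show ?case by (auto simp: mem_combine dest!: And.IH)
next
  case (Or \<phi>1 \<phi>2)
  then show ?case by (auto simp: mem_combine dest!: Or.IH)
next
  case (Until \<phi>1 \<phi>2)
  then show ?case by (cases gf) (auto simp: mem_combine mem_until_cases dest!: Until.IH)
next
  case (WUntil \<phi>1 \<phi>2)
  then show ?case by (cases gf) (auto simp: mem_combine mem_wuntil_cases dest!: WUntil.IH)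
qed auto

lemma normal_form_decomp_guards:
  assumes "(cs, \<psi>) \<in> set (decomp G gf \<phi>)" and "limit_free \<phi>"
    and "\<And>q \<chi>. q \<in> subfs \<phi> \<Longrightarrow> normal_form (lim_op gf \<chi>) \<Longrightarrow> normal_form (G (\<not> gf) q \<chi>)"
  shows "list_all normal_form cs"
  using assms
proof (induction \<phi> arbitrary: cs \<psi>)
  case (Next \<phi>)
  then show ?case by (auto simp: mem_decomp_Next dest!: Next.IH)
next
  case (And \<phi>1 \<phi>2)
  then show ?case by (auto simp: mem_combine dest!: And.IH)
next
  case (Or \<phi>1 \<phi>2)
  then show ?case by (auto simp: mem_combine dest!: Or.IH)
next
  case (Until \<phi>1 \<phi>2)
  then show ?case
    using normal_form_decomp_formula[of _ _ G False \<phi>2]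
    by (cases gf) (auto simp: mem_combine mem_until_cases subfs_refl dest!: Until.IH)
next
  case (WUntil \<phi>1 \<phi>2)
  then show ?case
    using normal_form_decomp_formula[of _ _ G True \<phi>1]
    by (cases gf) (auto simp: mem_combine mem_wuntil_cases subfs_refl dest!: WUntil.IH)
qed auto

lemma normal_form_guarded_disj_decomp:
  assumes "limit_free \<phi>"
    and "\<And>q \<chi>. q \<in> subfs \<phi> \<Longrightarrow> normal_form (lim_op gf \<chi>) \<Longrightarrow> normal_form (G (\<not> gf) q \<chi>)"
  shows "normal_form (guarded_disj gf (decomp G gf \<phi>))"
  using assms normal_form_decomp_guards normal_form_decomp_formula
  by (blast intro: normal_form_guarded_disj)

fun guard_budget :: "('a ltl \<Rightarrow> nat) \<Rightarrow> 'a ltl \<Rightarrow> nat" where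
  "guard_budget B (Next \<phi>) = guard_budget B \<phi>"
| "guard_budget B (And \<phi> \<psi>) = guard_budget B \<phi> + guard_budget B \<psi>"
| "guard_budget B (Or \<phi> \<psi>) = guard_budget B \<phi> + guard_budget B \<psi>"
| "guard_budget B (Until \<phi> \<psi>) = guard_budget B \<phi> + guard_budget B \<psi> + B \<psi>"
| "guard_budget B (WUntil \<phi> \<psi>) = guard_budget B \<phi> + guard_budget B \<psi> + B \<phi>"
| "guard_budget B _ = 0"

lemma guarded_size_decomp:
  assumes "(cs, \<psi>) \<in> set (decomp G gf \<phi>)"
    and "\<And>b q \<chi>. fsize \<chi> \<le> fsize q \<Longrightarrow> until_nodes \<chi> \<le> until_nodes q \<Longrightarrow> fsize (G b q \<chi>) < B q"
  shows "guarded_size (cs, \<psi>) \<le> fsize \<phi> + 1 + guard_budget B \<phi>"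
  using assms(1)
proof (induction \<phi> arbitrary: cs \<psi>)
  case (Next \<phi>)
  then show ?case by (auto simp: mem_decomp_Next dest!: Next.IH)
next
  case (And \<phi>1 \<phi>2)
  then show ?case by (auto simp: mem_combine dest!: And.IH)
next
  case (Or \<phi>1 \<phi>2)
  then show ?case by (auto simp: mem_combine dest!: Or.IH)
next
  case (Until \<phi>1 \<phi>2)
  let ?bound = "fsize (Until \<phi>1 \<phi>2) + 1 + guard_budget B (Until \<phi>1 \<phi>2)"
  have "guarded_size (cs1 @ cs2, Until \<psi>1 \<psi>2) \<le> ?bound"
    and "guarded_size (cs1 @ cs2 @ [G b \<phi>2 \<psi>2], WUntil \<psi>1 \<psi>2) \<le> ?bound"
    if "(cs1, \<psi>1) \<in> set (decomp G gf \<phi>1)" "(cs2, \<psi>2) \<in> set (decomp G gf \<phi>2)" for cs1 \<psi>1 cs2 \<psi>2 b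
    using Until.IH(1)[OF that(1)] Until.IH(2)[OF that(2)]
      decomp_formula_size[OF that(2)] assms(2)[of \<psi>2 \<phi>2 b] by simp_all
  then show ?case
    using Until.prems by (cases gf) (auto simp: mem_combine mem_until_cases)
next
  case (WUntil \<phi>1 \<phi>2)
  let ?bound = "fsize (WUntil \<phi>1 \<phi>2) + 1 + guard_budget B (WUntil \<phi>1 \<phi>2)"
  have "guarded_size (cs1 @ cs2, Until \<psi>1 \<psi>2) \<le> ?bound"
    and "guarded_size (cs1 @ cs2, WUntil \<psi>1 \<psi>2) \<le> ?bound"
    if "(cs1, \<psi>1) \<in> set (decomp G gf \<phi>1)" "(cs2, \<psi>2) \<in> set (decomp G gf \<phi>2)" for cs1 \<psi>1 cs2 \<psi>2
    using WUntil.IH(1)[OF that(1)] WUntil.IH(2)[OF that(2)] by simp_all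
  moreover have "guarded_size (cs1 @ [G b \<phi>1 \<psi>1], LTrue) \<le> ?bound"
    if "(cs1, \<psi>1) \<in> set (decomp G gf \<phi>1)" for cs1 \<psi>1 b
    using WUntil.IH(1)[OF that] decomp_formula_size[OF that] assms(2)[of \<psi>1 \<phi>1 b] by simp
  ultimately show ?case
    using WUntil.prems by (cases gf) (auto simp: mem_combine mem_wuntil_cases)
qed auto

section \<open>Arithmetic of the bound\<close>

lemma fsize_pos: "0 < fsize \<phi>"
  by (cases \<phi>) auto

lemma guard_budget_linear_le: "fsize \<phi> + guard_budget (\<lambda>q. fsize q + 2) \<phi> \<le> fsize \<phi> ^ 2"
proof (induction \<phi>)
  case (Until \<phi>1 \<phi>2)
  then show ?case
    using fsize_pos[of \<phi>1] by (simp add: power2_eq_square algebra_simps)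
next
  case (WUntil \<phi>1 \<phi>2)
  then show ?case
    using fsize_pos[of \<phi>2] by (simp add: power2_eq_square algebra_simps)
qed (simp_all add: power2_eq_square algebra_simps)

lemma add_le_pow2_mult: "(2::nat) ^ i * s + 2 ^ j * t \<le> 2 ^ i * 2 ^ j * (s + t)"
proof -
  have "(2::nat) ^ i * s \<le> 2 ^ i * 2 ^ j * s" and "(2::nat) ^ j * t \<le> 2 ^ i * 2 ^ j * t"
    by simp_all
  from add_mono[OF this] show ?thesis
    by (simp add: distrib_left)
qed

lemma pow2_quadratic_add_le:
  fixes s t a b :: nat
  assumes "s \<le> 2 ^ i * (a ^ 2 + 1)" and "t \<le> 2 ^ j * (b ^ 2 + 1)"
  shows "s + t \<le> 2 ^ i * 2 ^ j * ((a + b + 1) ^ 2 + 1)"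
proof -
  have "s + t \<le> 2 ^ i * 2 ^ j * ((a ^ 2 + 1) + (b ^ 2 + 1))"
    using add_mono[OF assms] add_le_pow2_mult by (rule order_trans)
  also have "\<dots> \<le> 2 ^ i * 2 ^ j * ((a + b + 1) ^ 2 + 1)"
    by (intro mult_le_mono2) (simp add: power2_eq_square algebra_simps)
  finally show ?thesis .
qed

lemma pow2_quadratic_add_guard_le:
  fixes s t u a b :: nat
  assumes "s \<le> 2 ^ i * (a ^ 2 + 1)" and "t \<le> 2 ^ j * (b ^ 2 + 1)" and "u \<le> 2 ^ j * (b ^ 2 + 2)"
  shows "s + t + u \<le> 2 * 2 ^ i * 2 ^ j * ((a + b + 1) ^ 2 + 1)"
proof -
  have "s + t + u \<le> 2 ^ i * (a ^ 2 + 1) + 2 ^ j * (2 * b ^ 2 + 3)"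
    using assms by (simp add: algebra_simps)
  also have "\<dots> \<le> 2 ^ i * 2 ^ j * ((a ^ 2 + 1) + (2 * b ^ 2 + 3))"
    by (rule add_le_pow2_mult)
  also have "\<dots> \<le> 2 ^ i * 2 ^ j * (2 * ((a + b + 1) ^ 2 + 1))"
    by (intro mult_le_mono2) (simp add: power2_eq_square algebra_simps)
  finally show ?thesis
    by (simp only: ac_simps)
qed

lemma guard_budget_exp_le:
  "fsize \<phi> + 1 + guard_budget (\<lambda>q. 2 ^ until_nodes q * (fsize q ^ 2 + 2)) \<phi>
     \<le> 2 ^ until_nodes \<phi> * (fsize \<phi> ^ 2 + 1)"
  (is "?lhs \<phi> \<le> ?rhs \<phi>")
proof (induction \<phi>)
  case (Next \<phi>)
  let ?X = "(2::nat) ^ until_nodes \<phi>" and ?a = "fsize \<phi>"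
  have X: "1 \<le> ?X"
    by simp
  have "?lhs (Next \<phi>) = ?lhs \<phi> + 1"
    by simp
  also have "\<dots> \<le> ?X * (?a ^ 2 + 1) + ?X"
    using Next.IH X by linarith
  also have "\<dots> \<le> ?rhs (Next \<phi>)"
    by (simp add: power2_eq_square algebra_simps)
  finally show ?case .
next
  case (And \<phi>1 \<phi>2)
  have "?lhs (And \<phi>1 \<phi>2) = ?lhs \<phi>1 + ?lhs \<phi>2"
    by simp
  also have "\<dots> \<le> ?rhs (And \<phi>1 \<phi>2)"
    using pow2_quadratic_add_le[OF And.IH] by (simp add: power_add)
  finally show ?case .
next
  case (Or \<phi>1 \<phi>2)
  have "?lhs (Or \<phi>1 \<phi>2) = ?lhs \<phi>1 + ?lhs \<phi>2"
    by simp
  also have "\<dots> \<le> ?rhs (Or \<phi>1 \<phi>2)"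
    using pow2_quadratic_add_le[OF Or.IH] by (simp add: power_add)
  finally show ?case .
next
  case (Until \<phi>1 \<phi>2)
  have "?lhs (Until \<phi>1 \<phi>2) = ?lhs \<phi>1 + ?lhs \<phi>2 + 2 ^ until_nodes \<phi>2 * (fsize \<phi>2 ^ 2 + 2)"
    by simp
  also have "\<dots> \<le> ?rhs (Until \<phi>1 \<phi>2)"
    using pow2_quadratic_add_guard_le[OF Until.IH order_refl] by (simp add: power_add)
  finally show ?case .
next
  case (WUntil \<phi>1 \<phi>2)
  have "?lhs (WUntil \<phi>1 \<phi>2) = ?lhs \<phi>2 + ?lhs \<phi>1 + 2 ^ until_nodes \<phi>1 * (fsize \<phi>1 ^ 2 + 2)"
    by simp
  also have "\<dots> \<le> ?rhs (WUntil \<phi>1 \<phi>2)"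
    using pow2_quadratic_add_guard_le[OF WUntil.IH(2,1) order_refl] by (simp add: power_add ac_simps)
  finally show ?case .
qed (simp_all add: power2_eq_square algebra_simps)

lemma pow_quadratic_le_pow3: "2 ^ k * ((k + 1) ^ 2 + 2) \<le> 3 ^ (k + 1) * ((k::nat) + 1)"
proof (induction k)
  case 0
  then show ?case by simp
next
  case (Suc k)
  let ?a = "(2::nat) ^ k" and ?b = "(3::nat) ^ (k + 1)"
  have IH: "?a * (k ^ 2 + 2 * k + 3) \<le> ?b * (k + 1)"
    using Suc.IH by (simp add: power2_eq_square algebra_simps)
  have poly: "2 * (k ^ 2 + 4 * k + 6) * (k + 1) \<le> 3 * (k + 2) * (k ^ 2 + 2 * k + 3)"
    by (simp add: power2_eq_square algebra_simps)
  have "(2 * ?a * (k ^ 2 + 4 * k + 6)) * (k + 1) = ?a * (2 * (k ^ 2 + 4 * k + 6) * (k + 1))"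
    by (simp add: algebra_simps)
  also have "\<dots> \<le> ?a * (3 * (k + 2) * (k ^ 2 + 2 * k + 3))"
    using poly by (rule mult_le_mono2)
  also have "\<dots> = 3 * (k + 2) * (?a * (k ^ 2 + 2 * k + 3))"
    by (simp add: algebra_simps)
  also have "\<dots> \<le> 3 * (k + 2) * (?b * (k + 1))"
    using IH by (rule mult_le_mono2)
  also have "\<dots> = (3 * (k + 2) * ?b) * (k + 1)"
    by (simp add: algebra_simps)
  finally have "2 * ?a * (k ^ 2 + 4 * k + 6) \<le> 3 * (k + 2) * ?b"
    by (simp only: mult_le_cancel2)
  then show ?case
    by (simp add: power2_eq_square algebra_simps)
qed

lemma final_size_bound:
  assumes "2 * t + 1 \<le> (n::nat)"
  shows "2 ^ t * (2 ^ t * (n ^ 2 + 1) + 1) \<le> 3 ^ n * n + 1"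
proof -
  define k where "k = n - 1"
  have n: "n = k + 1" and tk: "2 * t \<le> k"
    using assms unfolding k_def by simp_all
  have "2 ^ t * (2 ^ t * (n ^ 2 + 1) + 1) = 2 ^ (2 * t) * (n ^ 2 + 1) + 2 ^ t"
    by (simp add: algebra_simps power_mult[symmetric] mult_2[symmetric] power_add[symmetric] mult.commute)
  also have "\<dots> \<le> 2 ^ k * (n ^ 2 + 1) + 2 ^ k"
    using tk by (intro add_mono mult_le_mono1 power_increasing) auto
  also have "\<dots> = 2 ^ k * ((k + 1) ^ 2 + 2)"
    by (simp add: n algebra_simps)
  also have "\<dots> \<le> 3 ^ (k + 1) * (k + 1)"
    by (rule pow_quadratic_le_pow3)
  finally show ?thesis
    using n by simp
qed

section \<open>Normalising the guards\<close>

definition decomp_lim :: "bool \<Rightarrow> 'a ltl \<Rightarrow> 'a guarded list" where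
  "decomp_lim = decomp (\<lambda>b \<phi> _. lim_op b \<phi>)"

definition decomp_nf :: "bool \<Rightarrow> 'a ltl \<Rightarrow> 'a guarded list" where
  "decomp_nf = decomp (\<lambda>b _ \<psi>. guarded_disj b (decomp_lim b \<psi>))"

lemma sat_guarded_disj_decomp_lim:
  "sat w (guarded_disj gf (decomp_lim gf \<phi>)) \<longleftrightarrow> sat w (lim_op gf \<phi>)"
proof -
  have "lim_guard (\<lambda>b \<phi> _. lim_op b \<phi>)"
    by (simp add: lim_guard_def)
  then have "ltl_equiv (guarded_disj gf (decomp_lim gf \<phi>)) (lim_op gf \<phi>)"
    unfolding decomp_lim_def by (intro limit_decomp_equiv limit_decomp_decomp)
  then show ?thesis
    unfolding ltl_equiv_def by blast
qed

lemma lim_guard_decomp_lim: "lim_guard (\<lambda>b _ \<psi>. guarded_disj b (decomp_lim b \<psi>))"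
  unfolding lim_guard_def sat_guarded_disj_decomp_lim by (blast intro: ev_imp_lim_op)

lemma normal_form_decomp_lim:
  assumes "normal_form (lim_op (\<not> gf) \<phi>)"
  shows "normal_form (guarded_disj gf (decomp_lim gf \<phi>))"
  unfolding decomp_lim_def
proof (rule normal_form_guarded_disj_decomp)
  show "limit_free \<phi>"
    using assms normal_form_lim_op by blast
  show "normal_form (lim_op (\<not> gf) q)" if "q \<in> subfs \<phi>" for q
    using assms that by (rule normal_form_lim_op_subfs)
qed

lemma fsize_decomp_lim_less:
  "fsize (guarded_disj gf (decomp_lim gf \<phi>)) < 2 ^ until_nodes \<phi> * (fsize \<phi> ^ 2 + 2)"
proof -
  have "guarded_size (cs, \<psi>) \<le> fsize \<phi> ^ 2 + 1" if "(cs, \<psi>) \<in> set (decomp_lim gf \<phi>)" for cs \<psi>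
    using guarded_size_decomp[OF that[unfolded decomp_lim_def], of "\<lambda>q. fsize q + 2"]
      guard_budget_linear_le[of \<phi>] by simp
  then have "fsize (guarded_disj gf (decomp_lim gf \<phi>)) < length (decomp_lim gf \<phi>) * (fsize \<phi> ^ 2 + 1 + 1)"
    by (intro fsize_guarded_disj_less) (auto simp: decomp_lim_def decomp_nonempty)
  also have "\<dots> \<le> 2 ^ until_nodes \<phi> * (fsize \<phi> ^ 2 + 2)"
    using mult_le_mono1[OF length_decomp, of _ gf \<phi> "fsize \<phi> ^ 2 + 2"] unfolding decomp_lim_def by simp
  finally show ?thesis .
qed

lemma decomp_nf_equiv: "ltl_equiv (guarded_disj gf (decomp_nf gf \<phi>)) (lim_op gf \<phi>)"
  unfolding decomp_nf_def by (intro limit_decomp_equiv limit_decomp_decomp lim_guard_decomp_lim)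

lemma normal_form_decomp_nf:
  assumes "limit_free \<phi>"
  shows "normal_form (guarded_disj gf (decomp_nf gf \<phi>))"
  unfolding decomp_nf_def
  using assms by (rule normal_form_guarded_disj_decomp) (simp add: normal_form_decomp_lim)

lemma fsize_decomp_nf_less:
  "fsize (guarded_disj gf (decomp_nf gf \<phi>))
     < 2 ^ until_nodes \<phi> * (2 ^ until_nodes \<phi> * (fsize \<phi> ^ 2 + 1) + 1)"
proof -
  let ?B = "\<lambda>q. 2 ^ until_nodes q * (fsize q ^ 2 + 2)"
  have guard: "fsize (guarded_disj b (decomp_lim b \<chi>)) < ?B q"
    if "fsize \<chi> \<le> fsize q" "until_nodes \<chi> \<le> until_nodes q" for b \<chi> q
  proof -
    have "?B \<chi> \<le> ?B q"
      using that by (intro mult_le_mono power_increasing add_le_mono1 power_mono) auto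
    then show ?thesis
      using fsize_decomp_lim_less[of b \<chi>] by linarith
  qed
  have "guarded_size (cs, \<psi>) \<le> 2 ^ until_nodes \<phi> * (fsize \<phi> ^ 2 + 1)"
    if "(cs, \<psi>) \<in> set (decomp_nf gf \<phi>)" for cs \<psi>
    using guarded_size_decomp[OF that[unfolded decomp_nf_def], of ?B] guard guard_budget_exp_le[of \<phi>]
    by fastforce
  then have "fsize (guarded_disj gf (decomp_nf gf \<phi>))
      < length (decomp_nf gf \<phi>) * (2 ^ until_nodes \<phi> * (fsize \<phi> ^ 2 + 1) + 1)"
    by (intro fsize_guarded_disj_less) (auto simp: decomp_nf_def decomp_nonempty)
  also have "\<dots> \<le> 2 ^ until_nodes \<phi> * (2 ^ until_nodes \<phi> * (fsize \<phi> ^ 2 + 1) + 1)"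
    using length_decomp unfolding decomp_nf_def by (rule mult_le_mono1)
  finally show ?thesis .
qed

theorem proposition3:
  fixes \<phi> :: "'a ltl"
  assumes "limit_free \<phi>"
  shows "(\<exists>\<psi>. normal_form \<psi> \<and> ltl_equiv \<psi> (GF \<phi>) \<and> fsize \<psi> \<le> 3 ^ fsize \<phi> * fsize \<phi>)
       \<and> (\<exists>\<psi>. normal_form \<psi> \<and> ltl_equiv \<psi> (FG \<phi>) \<and> fsize \<psi> \<le> 3 ^ fsize \<phi> * fsize \<phi>)"
proof -
  have "\<exists>\<psi>. normal_form \<psi> \<and> ltl_equiv \<psi> (lim_op gf \<phi>) \<and> fsize \<psi> \<le> 3 ^ fsize \<phi> * fsize \<phi>" for gf
  proof (intro exI conjI)
    show "normal_form (guarded_disj gf (decomp_nf gf \<phi>))"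
      using assms by (rule normal_form_decomp_nf)
    show "ltl_equiv (guarded_disj gf (decomp_nf gf \<phi>)) (lim_op gf \<phi>)"
      by (rule decomp_nf_equiv)
    show "fsize (guarded_disj gf (decomp_nf gf \<phi>)) \<le> 3 ^ fsize \<phi> * fsize \<phi>"
      using fsize_decomp_nf_less[of gf \<phi>] final_size_bound[OF until_nodes_le_fsize[of \<phi>]] by linarith
  qed
  from this[of True] this[of False] show ?thesis
    by simp
qed

end
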